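(* Let $F=\{f_i\}_{i=1}^N$ be a uniform Parseval frame for an $n$-dimensional Hilbert space $\mathcal{H}_n$ and let $p>1$. Then the canonical dual $S_F^{-1}F=F$ belongs to $\zeta_{\mathfrak{F}}^{(1),p}(F)\cap\zeta_{\mathfrak{R}}^{(1),p}(F)\cap\zeta_{\mathcal{N}}^{(1),p}(F)$, and \[\mathrm{AE}_{\mathfrak{F}}^{(1),p}(F)=\mathrm{AE}_{\mathfrak{R}}^{(1),p}(F)=\mathrm{AE}_{\mathcal{N}}^{(1),p}(F)=\frac nN.\]
   Context: A uniform Parseval frame satisfies $\sum_i|\langle f,f_i\rangle|^2=\|f\|^2$ for all $f$ and has all $\|f_i\|$ equal; its frame operator is $S_F=I$. $G=\{g_i\}$ is a dual of $F$ if $f=\sum_i\langle f,f_i\rangle g_i$ for all $f$. For a dual $G$ let $E_if=\langle f,f_i\rangle g_i$ (one-erasure error operator) and define $\mathrm{AE}_{\mathfrak{F}}^{(1),p}(F,G)=\{\frac1N\sum_i\|E_i\|_{\mathfrak{F}}^p\}^{1/p}=\{\frac1N\sum_i(\|f_i\|\|g_i\|)^p\}^{1/p}$ (Frobenius norm), $\mathrm{AE}_{\mathfrak{R}}^{(1),p}(F,G)=\{\frac1N\sum_i\rho(E_i)^p\}^{1/p}=\{\frac1N\sum_i|\langle f_i,g_i\rangle|^p\}^{1/p}$ (spectral radius), and $\mathrm{AE}_{\mathcal{N}}^{(1),p}(F,G)=\{\frac1N\sum_i\omega(E_i)^p\}^{1/p}$ with $\omega(T)=\sup_{\|f\|=1}|\langle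 Tf,f\rangle|$ the numerical radius. For each $\ast\in\{\mathfrak{F},\mathfrak{R},\mathcal{N}\}$, $\mathrm{AE}_\ast^{(1),p}(F)$ is the infimum of $\mathrm{AE}_\ast^{(1),p}(F,G)$ over all duals $G$ of $F$ and $\zeta_\ast^{(1),p}(F)$ is the set of duals attaining it. *)

theory Defs
  imports "HOL-Analysis.Analysis"
begin

text \<open>The n-dimensional Hilbert space H_n is modelled as complex ^ 'n with n = CARD('n).\<close>

definition cinner :: "complex ^ 'n \<Rightarrow> complex ^ 'n \<Rightarrow> complex" where
  "cinner x y = (\<Sum>i\<in>UNIV. x $ i * cnj (y $ i))"

text \<open>Frames are finite families indexed by {..<N}.\<close>

definition parseval_frame :: "nat \<Rightarrow> (nat \<Rightarrow> complex ^ 'n) \<Rightarrow> bool" where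
  "parseval_frame N F \<longleftrightarrow> (\<forall>f. (\<Sum>i<N. (cmod (cinner f (F i)))\<^sup>2) = (norm f)\<^sup>2)"

definition uniform_frame :: "nat \<Rightarrow> (nat \<Rightarrow> complex ^ 'n) \<Rightarrow> bool" where
  "uniform_frame N F \<longleftrightarrow> (\<forall>i<N. \<forall>j<N. norm (F i) = norm (F j))"

definition is_dual :: "nat \<Rightarrow> (nat \<Rightarrow> complex ^ 'n) \<Rightarrow> (nat \<Rightarrow> complex ^ 'n) \<Rightarrow> bool" where
  "is_dual N F G \<longleftrightarrow> (\<forall>f. f = (\<Sum>i<N. cinner f (F i) *s G i))"

definition err_op :: "(nat \<Rightarrow> complex ^ 'n) \<Rightarrow> (nat \<Rightarrow> complex ^ 'n) \<Rightarrow> nat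
    \<Rightarrow> complex ^ 'n \<Rightarrow> complex ^ 'n" where
  "err_op F G i = (\<lambda>f. cinner f (F i) *s G i)"

definition frob_norm :: "(complex ^ 'n \<Rightarrow> complex ^ 'n) \<Rightarrow> real" where
  "frob_norm T = sqrt (\<Sum>j\<in>UNIV. (norm (T (axis j 1)))\<^sup>2)"

definition spec_radius :: "(complex ^ 'n \<Rightarrow> complex ^ 'n) \<Rightarrow> real" where
  "spec_radius T = Sup {cmod c | c. \<exists>x. x \<noteq> 0 \<and> T x = c *s x}"

definition num_radius :: "(complex ^ 'n \<Rightarrow> complex ^ 'n) \<Rightarrow> real" where
  "num_radius T = Sup {cmod (cinner (T f) f) | f. norm f = 1}"

text \<open>Average p-error for one erasure, with respect to an operator measure \<mu>.\<close>

definition AE1 :: "((complex ^ 'n \<Rightarrow> complex ^ 'n) \<Rightarrow> real) \<Rightarrow> real \<Rightarrow> nat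
    \<Rightarrow> (nat \<Rightarrow> complex ^ 'n) \<Rightarrow> (nat \<Rightarrow> complex ^ 'n) \<Rightarrow> real" where
  "AE1 \<mu> p N F G = ((1 / real N) * (\<Sum>i<N. (\<mu> (err_op F G i)) powr p)) powr (1 / p)"

definition AE1_opt :: "((complex ^ 'n \<Rightarrow> complex ^ 'n) \<Rightarrow> real) \<Rightarrow> real \<Rightarrow> nat
    \<Rightarrow> (nat \<Rightarrow> complex ^ 'n) \<Rightarrow> real" where
  "AE1_opt \<mu> p N F = Inf {AE1 \<mu> p N F G | G. is_dual N F G}"

definition zeta1 :: "((complex ^ 'n \<Rightarrow> complex ^ 'n) \<Rightarrow> real) \<Rightarrow> real \<Rightarrow> nat
    \<Rightarrow> (nat \<Rightarrow> complex ^ 'n) \<Rightarrow> (nat \<Rightarrow> complex ^ 'n) set" where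
  "zeta1 \<mu> p N F = {G. is_dual N F G \<and> AE1 \<mu> p N F G = AE1_opt \<mu> p N F}"

end

theory Submission
  imports Defs
begin

(* If G is any dual of F, then sum_i f_i (x) g_i is the identity, so taking traces gives
   sum_i <g_i, f_i> = n. Each of the three quantities dominates the trace |<g_i, f_i>| of the
   rank-one operator E_i, hence sum_i mu(E_i) >= n and the power-mean inequality yields
   AE >= n/N. A Parseval frame is its own dual, and for G = F all three quantities equal
   |f_i|^2, which is n/N for a uniform Parseval frame; so the bound is attained. *)

lemma power2_norm_cvec: "(norm (x :: complex ^ 'n))\<^sup>2 = (\<Sum>i\<in>UNIV. (cmod (x $ i))\<^sup>2)"
  unfolding norm_vec_def L2_set_def by (simp add: sum_nonneg)

lemma norm_axis_complex: "norm (axis j (1::complex) :: complex ^ 'n) = 1"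
proof -
  have "(norm (axis j (1::complex) :: complex ^ 'n))\<^sup>2 = 1"
    unfolding power2_norm_cvec by (simp add: axis_def if_distrib[of "\<lambda>z. (cmod z)\<^sup>2"] cong: if_cong)
  then show ?thesis by (simp add: power2_eq_1_iff)
qed

lemma norm_vector_smult: "norm (c *s (x :: complex ^ 'n)) = cmod c * norm x"
  unfolding norm_vec_def L2_set_def
  by (simp add: norm_mult power_mult_distrib sum_distrib_left[symmetric] real_sqrt_mult)

lemma cinner_self_eq_norm: "cinner x x = of_real ((norm x)\<^sup>2)"
  unfolding cinner_def power2_norm_cvec of_real_sum complex_norm_square by simp

lemma norm_cinner_self: "cmod (cinner x x) = (norm x)\<^sup>2"
  by (simp add: cinner_self_eq_norm norm_power)

lemma cinner_axis_left: "cinner (axis j 1) y = cnj (y $ j)"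
  unfolding cinner_def by (simp add: axis_def mult_delta_left mult_delta_right)

lemma cinner_axis_right: "cinner x (axis j 1) = x $ j"
  unfolding cinner_def by (simp add: axis_def if_distrib[of cnj] mult_delta_right cong: if_cong)

lemma cinner_add_left: "cinner (x + y) z = cinner x z + cinner y z"
  unfolding cinner_def by (simp add: distrib_right sum.distrib)

lemma cinner_add_right: "cinner x (y + z) = cinner x y + cinner x z"
  unfolding cinner_def by (simp add: distrib_left sum.distrib)

lemma cinner_smult_left: "cinner (c *s x) y = c * cinner x y"
  unfolding cinner_def by (simp add: sum_distrib_left mult.assoc)

lemma cinner_smult_right: "cinner x (c *s y) = cnj c * cinner x y"
  unfolding cinner_def by (simp add: sum_distrib_left algebra_simps)

lemma cinner_Cauchy_Schwarz: "cmod (cinner x y) \<le> norm x * norm y"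
proof -
  have "cmod (cinner x y) \<le> (\<Sum>i\<in>UNIV. cmod (x $ i) * cmod (y $ i))"
    unfolding cinner_def by (rule order.trans[OF norm_sum]) (simp add: norm_mult)
  also have "\<dots> \<le> L2_set (\<lambda>i. cmod (x $ i)) UNIV * L2_set (\<lambda>i. cmod (y $ i)) UNIV"
    using L2_set_mult_ineq[of "\<lambda>i. cmod (x $ i)" "\<lambda>i. cmod (y $ i)" UNIV] by simp
  finally show ?thesis unfolding norm_vec_def .
qed

definition rank_one :: "complex ^ 'n \<Rightarrow> complex ^ 'n \<Rightarrow> complex ^ 'n \<Rightarrow> complex ^ 'n" where
  "rank_one f g x = cinner x f *s g"

lemma err_op_eq_rank_one: "err_op F G i = rank_one (F i) (G i)"
  unfolding err_op_def rank_one_def by simp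

lemma frob_norm_rank_one: "frob_norm (rank_one f g) = norm f * norm g"
proof -
  have "(\<Sum>j\<in>UNIV. (norm (rank_one f g (axis j 1)))\<^sup>2) = (norm f)\<^sup>2 * (norm g)\<^sup>2"
    unfolding rank_one_def cinner_axis_left norm_vector_smult power2_norm_cvec[of f]
    by (simp add: power_mult_distrib sum_distrib_right)
  then show ?thesis
    unfolding frob_norm_def by (simp add: real_sqrt_mult)
qed

lemma rank_one_eigenvalue:
  assumes "x \<noteq> 0" and "rank_one f g x = c *s x"
  shows "c = cinner g f \<or> c = 0"
proof (rule disjCI)
  assume "c \<noteq> 0"
  have "cinner x f * cinner g f = c * cinner x f"
    using arg_cong[OF assms(2), of "\<lambda>y. cinner y f"] by (simp only: rank_one_def cinner_smult_left)
  moreover have "cinner x f \<noteq> 0"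
    using assms \<open>c \<noteq> 0\<close> unfolding rank_one_def by (auto simp: vec_eq_iff)
  ultimately show "c = cinner g f" by (simp add: mult.commute)
qed

lemma spec_radius_rank_one: "spec_radius (rank_one f g) = cmod (cinner g f)"
  unfolding spec_radius_def
proof (rule cSup_eq_maximum)
  show "cmod (cinner g f) \<in> {cmod c |c. \<exists>x. x \<noteq> 0 \<and> rank_one f g x = c *s x}"
  proof (cases "g = 0")
    case True
    then show ?thesis
      using axis_eq_0_iff[of undefined 1] unfolding rank_one_def cinner_def
      by (auto intro!: exI[of _ 0] exI[of _ "axis undefined 1"])
  next
    case False
    then show ?thesis unfolding rank_one_def by (auto intro!: exI[of _ g])
  qed
  show "y \<le> cmod (cinner g f)" if "y \<in> {cmod c |c. \<exists>x. x \<noteq> 0 \<and> rank_one f g x = c *s x}" for y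
    using that rank_one_eigenvalue by fastforce
qed

lemma num_radius_rank_one_bounds:
  "cmod (cinner g f) \<le> num_radius (rank_one f g)" "num_radius (rank_one f g) \<le> norm f * norm g"
proof -
  define W where "W = {cmod (cinner (rank_one f g x) x) | x. norm x = 1}"
  have W_le: "w \<le> norm f * norm g" if "w \<in> W" for w
  proof -
    obtain x where x: "norm x = 1" "w = cmod (cinner x f * cinner g x)"
      using \<open>w \<in> W\<close> unfolding W_def rank_one_def cinner_smult_left by blast
    then show ?thesis
      using cinner_Cauchy_Schwarz[of x f] cinner_Cauchy_Schwarz[of g x]
      by (simp add: norm_mult mult_mono)
  qed
  have "cmod (cinner g f) \<in> W"
  proof (cases "g = 0")
    case True
    then show ?thesis
      using norm_axis_complex[of undefined] unfolding W_def rank_one_def cinner_def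
      by (auto intro!: exI[of _ "axis undefined 1"])
  next
    case False
    define x where "x = complex_of_real (1 / norm g) *s g"
    have "norm x = 1"
      using False unfolding x_def norm_vector_smult by (simp add: norm_divide)
    moreover have "cinner (rank_one f g x) x = cinner g f"
      using False unfolding x_def rank_one_def cinner_smult_left cinner_smult_right cinner_self_eq_norm
      by (simp add: field_simps power2_eq_square)
    ultimately show ?thesis unfolding W_def by (auto intro!: exI[of _ x])
  qed
  then show "cmod (cinner g f) \<le> num_radius (rank_one f g)" "num_radius (rank_one f g) \<le> norm f * norm g"
    unfolding num_radius_def W_def[symmetric]
    using W_le by (auto intro!: cSup_upper cSup_least bdd_aboveI)
qed

lemma num_radius_rank_one_self: "num_radius (rank_one f f) = (norm f)\<^sup>2"
  using num_radius_rank_one_bounds[of f f] by (simp add: norm_cinner_self power2_eq_square)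

lemma sesquilinear_eq_0_if_diagonal_eq_0:
  fixes B :: "complex ^ 'n \<Rightarrow> complex ^ 'n \<Rightarrow> complex"
  assumes add_left: "\<And>x y z. B (x + y) z = B x z + B y z"
    and add_right: "\<And>x y z. B x (y + z) = B x y + B x z"
    and smult_left: "\<And>c x y. B (c *s x) y = c * B x y"
    and smult_right: "\<And>c x y. B x (c *s y) = cnj c * B x y"
    and diagonal: "\<And>x. B x x = 0"
  shows "B x y = 0"
proof -
  have "B (x + y) (x + y) = B x x + B x y + (B y x + B y y)"
    by (simp add: add_left add_right)
  then have sym: "B x y + B y x = 0"
    by (simp add: diagonal)
  have "B (x + \<i> *s y) (x + \<i> *s y) = B x x - \<i> * B x y + (\<i> * B y x + B y y)"
    by (simp add: add_left add_right smult_left smult_right algebra_simps)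
  then have skew: "B x y - B y x = 0"
    by (simp add: diagonal algebra_simps)
  from sym skew show ?thesis
    by (simp add: algebra_simps)
qed

lemma parseval_frame_self_dual:
  fixes F :: "nat \<Rightarrow> complex ^ 'n"
  assumes "parseval_frame N F"
  shows "is_dual N F F"
  unfolding is_dual_def
proof (intro allI)
  fix f :: "complex ^ 'n"
  define B where "B x y = (\<Sum>i<N. cinner x (F i) * cnj (cinner y (F i))) - cinner x y" for x y
  have "B x y = 0" for x y
  proof (rule sesquilinear_eq_0_if_diagonal_eq_0)
    show "B x x = 0" for x
    proof -
      have "(\<Sum>i<N. (cmod (cinner x (F i)))\<^sup>2) = (norm x)\<^sup>2"
        using assms unfolding parseval_frame_def by blast
      then have "(\<Sum>i<N. complex_of_real ((cmod (cinner x (F i)))\<^sup>2)) = cinner x x"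
        unfolding cinner_self_eq_norm by (metis of_real_sum)
      then show ?thesis
        unfolding B_def complex_norm_square by simp
    qed
    show "B (x + y) z = B x z + B y z" for x y z
      unfolding B_def cinner_add_left by (simp add: distrib_right sum.distrib)
    show "B x (y + z) = B x y + B x z" for x y z
      unfolding B_def cinner_add_left cinner_add_right by (simp add: distrib_left sum.distrib)
    show "B (c *s x) y = c * B x y" for c x y
      unfolding B_def cinner_smult_left by (simp add: right_diff_distrib sum_distrib_left mult.assoc)
    show "B x (c *s y) = cnj c * B x y" for c x y
      unfolding B_def cinner_smult_left cinner_smult_right
      by (simp add: right_diff_distrib sum_distrib_left mult.left_commute)
  qed
  then have "B f (axis j 1) = 0" for j .
  then show "f = (\<Sum>i<N. cinner f (F i) *s F i)"
    unfolding B_def cinner_axis_right cinner_axis_left by (simp add: vec_eq_iff)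
qed

lemma is_dual_trace:
  fixes F G :: "nat \<Rightarrow> complex ^ 'n"
  assumes "is_dual N F G"
  shows "(\<Sum>i<N. cinner (G i) (F i)) = of_nat CARD('n)"
proof -
  have "1 = (\<Sum>i<N. cnj (F i $ j) * G i $ j)" for j
  proof -
    have "(axis j 1 :: complex ^ 'n) = (\<Sum>i<N. cinner (axis j 1) (F i) *s G i)"
      using assms unfolding is_dual_def by blast
    from arg_cong[OF this, of "\<lambda>x. x $ j"] show ?thesis
      by (simp only: axis_nth sum_component vector_smult_component cinner_axis_left)
  qed
  then have "of_nat CARD('n) = (\<Sum>j\<in>UNIV. \<Sum>i<N. cnj (F i $ j) * G i $ j)"
    by simp
  also have "\<dots> = (\<Sum>i<N. cinner (G i) (F i))"
    unfolding cinner_def by (subst sum.swap) (simp add: mult.commute)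
  finally show ?thesis ..
qed

lemma parseval_frame_length_pos:
  assumes "parseval_frame N (F :: nat \<Rightarrow> complex ^ 'n)"
  shows "N > 0"
proof (rule ccontr)
  assume "\<not> N > 0"
  then have "\<forall>f :: complex ^ 'n. f = 0"
    using assms unfolding parseval_frame_def by simp
  then show False
    by (metis axis_eq_0_iff one_neq_zero)
qed

lemma uniform_parseval_frame_norm:
  fixes F :: "nat \<Rightarrow> complex ^ 'n"
  assumes "parseval_frame N F" and "uniform_frame N F" and "i < N"
  shows "(norm (F i))\<^sup>2 = real CARD('n) / real N"
proof -
  have "complex_of_real (\<Sum>k<N. (norm (F k))\<^sup>2) = complex_of_real (real CARD('n))"
    using is_dual_trace[OF parseval_frame_self_dual[OF assms(1)]]
    by (simp add: cinner_self_eq_norm)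
  then have trace: "(\<Sum>k<N. (norm (F k))\<^sup>2) = real CARD('n)"
    by (simp only: of_real_eq_iff)
  have "norm (F k) = norm (F i)" if "k < N" for k
    using assms(2,3) that unfolding uniform_frame_def by blast
  then have "(\<Sum>k<N. (norm (F k))\<^sup>2) = (\<Sum>k<N. (norm (F i))\<^sup>2)"
    by (intro sum.cong refl) simp
  with trace show ?thesis
    using parseval_frame_length_pos[OF assms(1)] by (simp add: field_simps)
qed

lemma powr_tangent_le:
  fixes m t p :: real
  assumes "p \<ge> 1" and "m > 0" and "t \<ge> 0"
  shows "m powr p + p * m powr (p - 1) * (t - m) \<le> t powr p"
proof (cases "p = 1")
  case True
  then show ?thesis using assms by simp
next
  case False
  define q where "q = p / (p - 1)"
  have "p > 1"
    using assms(1) False by simp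
  then have "q > 1" and "1 / p + 1 / q = 1" and "p / q = p - 1"
    unfolding q_def by (auto simp: field_simps)
  have "m powr p = m * m powr (p - 1)"
    using assms(2) by (simp add: powr_mult_base)
  moreover have "(m powr (p - 1)) powr q = m powr p"
    using \<open>p > 1\<close> unfolding q_def powr_powr by simp
  then have "t * m powr (p - 1) \<le> t powr p / p + m powr p / q"
    using Youngs_inequality[OF \<open>p > 1\<close> \<open>q > 1\<close> \<open>1 / p + 1 / q = 1\<close> assms(3), of "m powr (p - 1)"]
    by simp
  then have "p * (t * m powr (p - 1)) \<le> t powr p + (p / q) * m powr p"
    using \<open>p > 1\<close> by (simp add: field_simps)
  ultimately show ?thesis
    using \<open>p / q = p - 1\<close> by (simp add: algebra_simps)
qed

lemma mean_le_power_mean: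
  fixes a :: "'a \<Rightarrow> real"
  assumes "finite S" and "S \<noteq> {}" and "\<And>i. i \<in> S \<Longrightarrow> a i \<ge> 0" and "p \<ge> 1"
  shows "sum a S / card S \<le> ((1 / card S) * (\<Sum>i\<in>S. a i powr p)) powr (1 / p)"
proof -
  define m where "m = sum a S / card S"
  have card_pos: "card S > 0"
    using assms(1,2) by (simp add: card_gt_0_iff)
  have "m \<ge> 0"
    using assms(3) unfolding m_def by (simp add: sum_nonneg)
  have "card S * m powr p \<le> (\<Sum>i\<in>S. a i powr p)"
  proof (cases "m = 0")
    case True
    then show ?thesis
      using assms(3,4) by (simp add: sum_nonneg)
  next
    case False
    then have "m > 0"
      using \<open>m \<ge> 0\<close> by simp
    define c where "c = p * m powr (p - 1)"
    have "sum a S = card S * m"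
      using card_pos unfolding m_def by simp
    then have "(\<Sum>i\<in>S. m powr p + c * (a i - m)) = card S * m powr p"
      by (simp add: sum.distrib sum_subtractf right_diff_distrib sum_distrib_left[symmetric])
    moreover have "(\<Sum>i\<in>S. m powr p + c * (a i - m)) \<le> (\<Sum>i\<in>S. a i powr p)"
      using powr_tangent_le[OF assms(4) \<open>m > 0\<close>] assms(3) unfolding c_def
      by (intro sum_mono) (simp add: mult.assoc)
    ultimately show ?thesis
      by simp
  qed
  then have "m powr p \<le> (1 / card S) * (\<Sum>i\<in>S. a i powr p)"
    using card_pos by (simp add: field_simps)
  then have "(m powr p) powr (1 / p) \<le> ((1 / card S) * (\<Sum>i\<in>S. a i powr p)) powr (1 / p)"
    using assms(4) by (intro powr_mono2) auto
  moreover have "(m powr p) powr (1 / p) = m"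
    using \<open>m \<ge> 0\<close> assms(4) by (simp add: powr_powr)
  ultimately show ?thesis
    unfolding m_def by simp
qed

lemma AE1_dual_lower_bound:
  fixes F G :: "nat \<Rightarrow> complex ^ 'n"
  assumes "is_dual N F G" and "N > 0" and "p \<ge> 1"
    and dominates_trace: "\<And>f g. cmod (cinner g f) \<le> \<mu> (rank_one f g)"
  shows "real CARD('n) / real N \<le> AE1 \<mu> p N F G"
proof -
  define a where "a i = \<mu> (err_op F G i)" for i
  have trace_le: "cmod (cinner (G i) (F i)) \<le> a i" for i
    unfolding a_def err_op_eq_rank_one by (rule dominates_trace)
  have "real CARD('n) = cmod (\<Sum>i<N. cinner (G i) (F i))"
    using is_dual_trace[OF assms(1)] by simp
  also have "\<dots> \<le> (\<Sum>i<N. cmod (cinner (G i) (F i)))"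
    by (rule norm_sum)
  also have "\<dots> \<le> sum a {..<N}"
    using trace_le by (rule sum_mono)
  finally have "real CARD('n) / real N \<le> sum a {..<N} / card {..<N}"
    by (simp add: divide_right_mono)
  also have "\<dots> \<le> ((1 / card {..<N}) * (\<Sum>i<N. a i powr p)) powr (1 / p)"
    using assms(2,3) order_trans[OF norm_ge_zero trace_le] by (intro mean_le_power_mean) auto
  finally show ?thesis
    unfolding AE1_def a_def by simp
qed

lemma AE1_canonical_dual:
  fixes F :: "nat \<Rightarrow> complex ^ 'n"
  assumes "parseval_frame N F" and "uniform_frame N F" and "p \<noteq> 0"
    and diagonal: "\<And>f. \<mu> (rank_one f f) = (norm f)\<^sup>2"
  shows "AE1 \<mu> p N F F = real CARD('n) / real N"
proof -
  define c where "c = real CARD('n) / real N"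
  have "N > 0"
    using assms(1) by (rule parseval_frame_length_pos)
  then have "c > 0"
    unfolding c_def by simp
  have "(\<Sum>i<N. \<mu> (err_op F F i) powr p) = (\<Sum>i<N. c powr p)"
    using uniform_parseval_frame_norm[OF assms(1,2)]
    unfolding err_op_eq_rank_one diagonal c_def by simp
  then have "AE1 \<mu> p N F F = (c powr p) powr (1 / p)"
    unfolding AE1_def using \<open>N > 0\<close> by simp
  also have "\<dots> = c"
    using \<open>c > 0\<close> assms(3) by (simp add: powr_powr)
  finally show ?thesis
    unfolding c_def .
qed

lemma canonical_dual_optimal:
  fixes F :: "nat \<Rightarrow> complex ^ 'n"
  assumes "parseval_frame N F" and "uniform_frame N F" and "p \<ge> 1"
    and "\<And>f g. cmod (cinner g f) \<le> \<mu> (rank_one f g)"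
    and "\<And>f. \<mu> (rank_one f f) = (norm f)\<^sup>2"
  shows "F \<in> zeta1 \<mu> p N F \<and> AE1_opt \<mu> p N F = real CARD('n) / real N"
proof -
  have "N > 0"
    using assms(1) by (rule parseval_frame_length_pos)
  have self_dual: "is_dual N F F"
    using assms(1) by (rule parseval_frame_self_dual)
  have canonical: "AE1 \<mu> p N F F = real CARD('n) / real N"
    using assms(1,2,3,5) by (intro AE1_canonical_dual) auto
  have opt: "AE1_opt \<mu> p N F = real CARD('n) / real N"
    unfolding AE1_opt_def
  proof (rule cInf_eq_minimum)
    show "real CARD('n) / real N \<in> {AE1 \<mu> p N F G |G. is_dual N F G}"
      using canonical self_dual by (auto intro!: exI[of _ F])
    show "real CARD('n) / real N \<le> x" if "x \<in> {AE1 \<mu> p N F G |G. is_dual N F G}" for x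
      using that AE1_dual_lower_bound[OF _ \<open>N > 0\<close> assms(3,4)] by auto
  qed
  then show ?thesis
    unfolding zeta1_def using self_dual canonical by simp
qed

theorem proposition5p8:
  fixes F :: "nat \<Rightarrow> complex ^ 'n" and N :: nat and p :: real
  assumes "parseval_frame N F" and "uniform_frame N F" and "p > 1"
  shows "F \<in> zeta1 frob_norm p N F \<inter> zeta1 spec_radius p N F \<inter> zeta1 num_radius p N F
    \<and> AE1_opt frob_norm p N F = real CARD('n) / real N
    \<and> AE1_opt spec_radius p N F = real CARD('n) / real N
    \<and> AE1_opt num_radius p N F = real CARD('n) / real N"
proof -
  have "p \<ge> 1"
    using assms(3) by simp
  have frob: "F \<in> zeta1 frob_norm p N F \<and> AE1_opt frob_norm p N F = real CARD('n) / real N"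
    using assms(1,2) \<open>p \<ge> 1\<close>
  proof (rule canonical_dual_optimal)
    show "cmod (cinner g f) \<le> frob_norm (rank_one f g)" for f g :: "complex ^ 'n"
      using cinner_Cauchy_Schwarz[of g f] by (simp add: frob_norm_rank_one mult.commute)
  qed (simp add: frob_norm_rank_one power2_eq_square)
  have spec: "F \<in> zeta1 spec_radius p N F \<and> AE1_opt spec_radius p N F = real CARD('n) / real N"
    using assms(1,2) \<open>p \<ge> 1\<close>
    by (rule canonical_dual_optimal) (simp_all add: spec_radius_rank_one norm_cinner_self)
  have num: "F \<in> zeta1 num_radius p N F \<and> AE1_opt num_radius p N F = real CARD('n) / real N"
    using assms(1,2) \<open>p \<ge> 1\<close> num_radius_rank_one_bounds(1) num_radius_rank_one_self
    by (rule canonical_dual_optimal)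
  show ?thesis
    using frob spec num by blast
qed

end
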